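(* Consider the perturbed federated algorithm described in the context, with $\beta\in(0,1)$. Assume that the bounded variance, bounded stochastic gradient norm and $L$-smoothness assumptions hold. Then for every round $t\ge0$ and every pair of clients $i,j$, $$\mathbb{E}\|\mathbf{u}^i_t-\mathbf{u}^j_t\|^2\le\mathbb{1}_{t\ge1}\,4\gamma_{t-1}^2E^2G^2.$$
   Context: Setting: there are $C$ clients with local objectives $F_i:\mathbb{R}^D\to\mathbb{R}$. Similarity weights $p_{in}\ge0$ are symmetric, satisfy $p_{ii}=0$, and $\sum_{i,n}p_{in}=1$. Let $p_i=\sum_np_{in}>0$. Algorithm, with parameter $\beta$, $E\ge1$ local steps and step sizes $\gamma_t$, all clients participating: - $\mathbf{u}^i_0=\overline{\mathbf{w}}_{0,0}$. - In round $t$, $\mathbf{w}^i_{t,0}=\overline{\mathbf{w}}_{t,0}$. For $k=0,\dots,E-1$, $\widetilde{\mathbf{w}}^i_{t,k}=\beta\mathbf{w}^i_{t,k}+(1-\beta)\mathbf{u}^i_t$ and $\mathbf{w}^i_{t,k+1}=\mathbf{w}^i_{t,k}-\gamma_tg_i(\widetilde{\mathbf{w}}^i_{t,k})$, with stochastic gradients $g_i$ of $F_i$ sampled independently given the past. - $\overline{\mathbf{w}}_{t,k}=\sum_ip_i\mathbf{w}^i_{t,k}$ and $\overline{\mathbf{w}}_{t+1,0}=\overline{\mathbf{w}}_{t,E}$. - For $t\ge1$, $\mathbf{u}^i_t=\frac1{p_i}\sum_np_{in}\mathbf{w}^n_{t-1,E}$. Assumptions: - Unbiasedness: $\mathbb{E}\,g_i(\widetilde{\mathbf{w}}^i_{t,k})=\nabla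 F_i(\widetilde{\mathbf{w}}^i_{t,k})$. - Variance: $\mathbb{E}\|g_i(\widetilde{\mathbf{w}}^i_{t,k})-\nabla F_i(\widetilde{\mathbf{w}}^i_{t,k})\|^2\le\sigma^2$. - Bounded second moment: $\mathbb{E}\|g_i(\widetilde{\mathbf{w}}^i_{t,k})\|^2\le G^2$. - Each $\nabla F_i$ is $L$-Lipschitz. $\mathbb{E}$ is total expectation. *)

theory Defs
  imports "HOL-Analysis.Analysis" "HOL-Probability.Probability"
begin

text \<open>Clients are indexed by 0..C-1. p i n are the similarity weights,
  pbar p C i = p_i = sum_n p_in.\<close>

definition pbar :: "(nat \<Rightarrow> nat \<Rightarrow> real) \<Rightarrow> nat \<Rightarrow> nat \<Rightarrow> real" where
  "pbar p C i = (\<Sum>n<C. p i n)"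

definition avg_w :: "(nat \<Rightarrow> nat \<Rightarrow> real) \<Rightarrow> nat \<Rightarrow> (nat \<Rightarrow> 'a::real_vector) \<Rightarrow> 'a" where
  "avg_w p C W = (\<Sum>i<C. pbar p C i *\<^sub>R W i)"

definition anchor :: "(nat \<Rightarrow> nat \<Rightarrow> real) \<Rightarrow> nat \<Rightarrow> (nat \<Rightarrow> 'a::real_vector) \<Rightarrow> nat \<Rightarrow> 'a" where
  "anchor p C W i = (1 / pbar p C i) *\<^sub>R (\<Sum>n<C. p i n *\<^sub>R W n)"

text \<open>Local run of one client within one round: start point ws, anchor u,
  step size gam, stochastic gradient oracle gr k x (for local step k at point x).
  local_w ... k = w_{t,k}.\<close>
primrec local_w :: "real \<Rightarrow> real \<Rightarrow> (nat \<Rightarrow> 'a \<Rightarrow> 'a) \<Rightarrow> 'a \<Rightarrow> 'a \<Rightarrow> nat \<Rightarrow> 'a::real_vector" where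
  "local_w beta gam gr ws u 0 = ws"
| "local_w beta gam gr ws u (Suc k) =
     local_w beta gam gr ws u k
       - gam *\<^sub>R gr k (beta *\<^sub>R local_w beta gam gr ws u k + (1 - beta) *\<^sub>R u)"

text \<open>For a fixed realisation of the randomness, g i t k x is the stochastic
  gradient of F_i returned at point x in local step k of round t.
  last_iters ... t i = w^i_{t,E}.\<close>
primrec last_iters :: "(nat \<Rightarrow> nat \<Rightarrow> real) \<Rightarrow> nat \<Rightarrow> real \<Rightarrow> nat \<Rightarrow> (nat \<Rightarrow> real)
    \<Rightarrow> (nat \<Rightarrow> nat \<Rightarrow> nat \<Rightarrow> 'a \<Rightarrow> 'a) \<Rightarrow> 'a \<Rightarrow> nat \<Rightarrow> nat \<Rightarrow> 'a::real_vector" where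
  "last_iters p C beta E gamma g w0 0 =
     (\<lambda>i. local_w beta (gamma 0) (g i 0) w0 w0 E)"
| "last_iters p C beta E gamma g w0 (Suc t) =
     (\<lambda>i. local_w beta (gamma (Suc t)) (g i (Suc t))
            (avg_w p C (last_iters p C beta E gamma g w0 t))
            (anchor p C (last_iters p C beta E gamma g w0 t) i) E)"

definition u_fed :: "(nat \<Rightarrow> nat \<Rightarrow> real) \<Rightarrow> nat \<Rightarrow> real \<Rightarrow> nat \<Rightarrow> (nat \<Rightarrow> real)
    \<Rightarrow> (nat \<Rightarrow> nat \<Rightarrow> nat \<Rightarrow> 'a \<Rightarrow> 'a) \<Rightarrow> 'a \<Rightarrow> nat \<Rightarrow> nat \<Rightarrow> 'a::real_vector" where
  "u_fed p C beta E gamma g w0 t i =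
     (if t = 0 then w0 else anchor p C (last_iters p C beta E gamma g w0 (t - 1)) i)"

definition wbar_fed :: "(nat \<Rightarrow> nat \<Rightarrow> real) \<Rightarrow> nat \<Rightarrow> real \<Rightarrow> nat \<Rightarrow> (nat \<Rightarrow> real)
    \<Rightarrow> (nat \<Rightarrow> nat \<Rightarrow> nat \<Rightarrow> 'a \<Rightarrow> 'a) \<Rightarrow> 'a \<Rightarrow> nat \<Rightarrow> 'a::real_vector" where
  "wbar_fed p C beta E gamma g w0 t =
     (if t = 0 then w0 else avg_w p C (last_iters p C beta E gamma g w0 (t - 1)))"

definition w_fed :: "(nat \<Rightarrow> nat \<Rightarrow> real) \<Rightarrow> nat \<Rightarrow> real \<Rightarrow> nat \<Rightarrow> (nat \<Rightarrow> real)
    \<Rightarrow> (nat \<Rightarrow> nat \<Rightarrow> nat \<Rightarrow> 'a \<Rightarrow> 'a) \<Rightarrow> 'a \<Rightarrow> nat \<Rightarrow> nat \<Rightarrow> nat \<Rightarrow> 'a::real_vector" where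
  "w_fed p C beta E gamma g w0 t k i =
     local_w beta (gamma t) (g i t) (wbar_fed p C beta E gamma g w0 t)
       (u_fed p C beta E gamma g w0 t i) k"

definition wt_fed :: "(nat \<Rightarrow> nat \<Rightarrow> real) \<Rightarrow> nat \<Rightarrow> real \<Rightarrow> nat \<Rightarrow> (nat \<Rightarrow> real)
    \<Rightarrow> (nat \<Rightarrow> nat \<Rightarrow> nat \<Rightarrow> 'a \<Rightarrow> 'a) \<Rightarrow> 'a \<Rightarrow> nat \<Rightarrow> nat \<Rightarrow> nat \<Rightarrow> 'a::real_vector" where
  "wt_fed p C beta E gamma g w0 t k i =
     beta *\<^sub>R w_fed p C beta E gamma g w0 t k i + (1 - beta) *\<^sub>R u_fed p C beta E gamma g w0 t i"

end

theory Submission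
  imports Defs
begin

(* All clients start round t - 1 from the same average, so each local endpoint differs from it by
   gamma times a sum of E stochastic gradients; its squared deviation is at most gamma^2 E times the
   sum of the squared gradient norms. Each anchor u^i_t is a convex combination of these endpoints,
   so Jensen's inequality for the squared norm transfers the bound to u^i_t minus the average, and
   |a - b|^2 <= 2 |a - c|^2 + 2 |b - c|^2 together with the second-moment bound gives
   4 gamma^2 E^2 G^2 in expectation. *)

lemma convex_on_norm_power2: "convex_on UNIV (\<lambda>x::'a::real_normed_vector. (norm x)\<^sup>2)"
proof
  fix t :: real and x y :: 'a
  assume t: "0 < t" "t < 1"
  have "norm ((1 - t) *\<^sub>R x + t *\<^sub>R y) \<le> (1 - t) * norm x + t * norm y"
    using t by (metis abs_of_pos diff_gt_0_iff_gt norm_scaleR norm_triangle_le order.refl)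
  then have "(norm ((1 - t) *\<^sub>R x + t *\<^sub>R y))\<^sup>2 \<le> ((1 - t) * norm x + t * norm y)\<^sup>2"
    by (simp add: power_mono)
  also have "\<dots> \<le> (1 - t) * (norm x)\<^sup>2 + t * (norm y)\<^sup>2"
    using t convex_onD[OF convex_power2, of t "norm x" "norm y"] by simp
  finally show "(norm ((1 - t) *\<^sub>R x + t *\<^sub>R y))\<^sup>2 \<le> (1 - t) * (norm x)\<^sup>2 + t * (norm y)\<^sup>2" .
qed simp

lemma norm_weighted_mean_power2_le:
  fixes x :: "'i \<Rightarrow> 'a::real_normed_vector"
  assumes "finite A" "\<And>i. i \<in> A \<Longrightarrow> 0 \<le> w i" "0 < sum w A"
  shows "(norm ((1 / sum w A) *\<^sub>R (\<Sum>i\<in>A. w i *\<^sub>R x i)))\<^sup>2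
           \<le> (1 / sum w A) * (\<Sum>i\<in>A. w i * (norm (x i))\<^sup>2)"
proof -
  have "A \<noteq> {}" using assms(3) by auto
  moreover have "(\<Sum>i\<in>A. w i / sum w A) = 1"
    using assms(3) by (simp flip: sum_divide_distrib)
  ultimately have "(norm (\<Sum>i\<in>A. (w i / sum w A) *\<^sub>R x i))\<^sup>2
                     \<le> (\<Sum>i\<in>A. (w i / sum w A) * (norm (x i))\<^sup>2)"
    using assms by (intro convex_on_sum[OF _ _ convex_on_norm_power2]) auto
  then show ?thesis
    by (simp add: scaleR_sum_right sum_distrib_left)
qed

lemma norm_sum_power2_le:
  fixes x :: "'i \<Rightarrow> 'a::real_normed_vector"
  shows "(norm (\<Sum>i\<in>A. x i))\<^sup>2 \<le> card A * (\<Sum>i\<in>A. (norm (x i))\<^sup>2)"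
proof -
  have "(norm (\<Sum>i\<in>A. x i))\<^sup>2 \<le> (\<Sum>i\<in>A. norm (x i))\<^sup>2"
    by (intro power_mono norm_sum) simp
  also have "\<dots> \<le> card A * (\<Sum>i\<in>A. (norm (x i))\<^sup>2)"
    using sum_squared_le_sum_of_squares[of "\<lambda>i. norm (x i)" A] by (simp add: mult.commute)
  finally show ?thesis .
qed

lemma norm_diff_power2_le:
  fixes a b c :: "'a::real_normed_vector"
  shows "(norm (a - b))\<^sup>2 \<le> 2 * (norm (a - c))\<^sup>2 + 2 * (norm (b - c))\<^sup>2"
proof -
  have "(norm (a - b))\<^sup>2 \<le> (norm (a - c) + norm (b - c))\<^sup>2"
    using norm_triangle_ineq4[of "a - c" "b - c"] by (intro power_mono) auto
  also have "\<dots> \<le> 2 * (norm (a - c))\<^sup>2 + 2 * (norm (b - c))\<^sup>2"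
    using zero_le_power2[of "norm (a - c) - norm (b - c)"]
    unfolding power2_diff power2_sum by linarith
  finally show ?thesis .
qed

lemma norm_anchor_power2_le:
  assumes "0 < pbar p C i" "\<And>n. n < C \<Longrightarrow> 0 \<le> p i n"
  shows "(norm (anchor p C X i))\<^sup>2 \<le> anchor p C (\<lambda>n. (norm (X n))\<^sup>2) i"
  using norm_weighted_mean_power2_le[of "{..<C}" "p i" X] assms
  by (simp add: anchor_def pbar_def)

lemma anchor_diff_const:
  assumes "pbar p C i \<noteq> 0"
  shows "anchor p C X i - W = anchor p C (\<lambda>n. X n - W) i"
proof -
  have "(\<Sum>n<C. p i n *\<^sub>R (X n - W)) = (\<Sum>n<C. p i n *\<^sub>R X n) - pbar p C i *\<^sub>R W"
    by (simp add: scaleR_diff_right sum_subtractf pbar_def scaleR_sum_left)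
  then show ?thesis
    using assms by (simp add: anchor_def scaleR_diff_right)
qed

lemma anchor_mult_left:
  fixes X :: "nat \<Rightarrow> real"
  shows "anchor p C (\<lambda>n. c * X n) i = c * anchor p C X i"
  by (simp add: anchor_def sum_distrib_left mult.left_commute)

lemma anchor_mono:
  fixes X Y :: "nat \<Rightarrow> real"
  assumes "0 < pbar p C i" "\<And>n. n < C \<Longrightarrow> 0 \<le> p i n" "\<And>n. n < C \<Longrightarrow> X n \<le> Y n"
  shows "anchor p C X i \<le> anchor p C Y i"
  using assms unfolding anchor_def by (auto intro!: divide_right_mono sum_mono mult_left_mono)

lemma integrable_anchor:
  fixes X :: "nat \<Rightarrow> 'w \<Rightarrow> real"
  assumes "\<And>n. n < C \<Longrightarrow> integrable M (X n)"
  shows "integrable M (\<lambda>\<omega>. anchor p C (\<lambda>n. X n \<omega>) i)"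
  unfolding anchor_def real_scaleR_def using assms
  by (intro integrable_mult_right Bochner_Integration.integrable_sum) simp

lemma integral_anchor_le:
  fixes X :: "nat \<Rightarrow> 'w \<Rightarrow> real"
  assumes "0 < pbar p C i" "\<And>n. n < C \<Longrightarrow> 0 \<le> p i n"
    and "\<And>n. n < C \<Longrightarrow> integrable M (X n)" "\<And>n. n < C \<Longrightarrow> integral\<^sup>L M (X n) \<le> B"
  shows "(\<integral>\<omega>. anchor p C (\<lambda>n. X n \<omega>) i \<partial>M) \<le> B"
proof -
  have "(\<integral>\<omega>. anchor p C (\<lambda>n. X n \<omega>) i \<partial>M) = anchor p C (\<lambda>n. integral\<^sup>L M (X n)) i"
    using assms(3) by (simp add: anchor_def)
  also have "\<dots> \<le> anchor p C (\<lambda>_. B) i"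
    using assms by (intro anchor_mono) auto
  also have "\<dots> = B"
    using assms(1) by (simp add: anchor_def pbar_def flip: sum_distrib_right)
  finally show ?thesis .
qed

lemma integral_sum_le:
  fixes X :: "'i \<Rightarrow> 'w \<Rightarrow> real" and B :: real
  assumes "\<And>k. k \<in> K \<Longrightarrow> integrable M (X k)" "\<And>k. k \<in> K \<Longrightarrow> integral\<^sup>L M (X k) \<le> B"
  shows "(\<integral>\<omega>. (\<Sum>k\<in>K. X k \<omega>) \<partial>M) \<le> card K * B"
  using assms by (simp add: sum_bounded_above)

lemma local_w_eq_start_minus_sum:
  "local_w beta gam gr ws u K =
     ws - gam *\<^sub>R (\<Sum>k<K. gr k (beta *\<^sub>R local_w beta gam gr ws u k + (1 - beta) *\<^sub>R u))"
  by (induction K) (simp_all add: algebra_simps)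

lemma last_iters_minus_wbar_fed:
  "last_iters p C beta E gamma G w0 s n - wbar_fed p C beta E gamma G w0 s
     = - gamma s *\<^sub>R (\<Sum>k<E. G n s k (wt_fed p C beta E gamma G w0 s k n))"
proof -
  have last: "last_iters p C beta E gamma G w0 s n =
          local_w beta (gamma s) (G n s) (wbar_fed p C beta E gamma G w0 s)
            (u_fed p C beta E gamma G w0 s n) E"
    by (cases s) (simp_all add: wbar_fed_def u_fed_def)
  show ?thesis
    unfolding last local_w_eq_start_minus_sum[where K = E] by (simp add: wt_fed_def w_fed_def)
qed

definition local_grads_sq_norm_sum :: "(nat \<Rightarrow> nat \<Rightarrow> real) \<Rightarrow> nat \<Rightarrow> real \<Rightarrow> nat \<Rightarrow> (nat \<Rightarrow> real)
    \<Rightarrow> (nat \<Rightarrow> nat \<Rightarrow> nat \<Rightarrow> 'a \<Rightarrow> 'a) \<Rightarrow> 'a::real_normed_vector \<Rightarrow> nat \<Rightarrow> nat \<Rightarrow> real" where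
  "local_grads_sq_norm_sum p C beta E gamma G w0 t n =
     (\<Sum>k<E. (norm (G n t k (wt_fed p C beta E gamma G w0 t k n)))\<^sup>2)"

lemma norm_u_fed_minus_wbar_fed_power2_le:
  assumes "0 < pbar p C i" "\<And>n. n < C \<Longrightarrow> 0 \<le> p i n"
  shows "(norm (u_fed p C beta E gamma G w0 (Suc s) i - wbar_fed p C beta E gamma G w0 s))\<^sup>2
           \<le> (gamma s)\<^sup>2 * E * anchor p C (local_grads_sq_norm_sum p C beta E gamma G w0 s) i"
proof -
  let ?X = "last_iters p C beta E gamma G w0 s"
  let ?W = "wbar_fed p C beta E gamma G w0 s"
  let ?Q = "local_grads_sq_norm_sum p C beta E gamma G w0 s"
  have local_dev: "(norm (?X n - ?W))\<^sup>2 \<le> (gamma s)\<^sup>2 * E * ?Q n" for n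
    using norm_sum_power2_le[of "\<lambda>k. G n s k (wt_fed p C beta E gamma G w0 s k n)" "{..<E}"]
    by (simp add: last_iters_minus_wbar_fed local_grads_sq_norm_sum_def power_mult_distrib
        mult.assoc mult_left_mono)
  have "(norm (u_fed p C beta E gamma G w0 (Suc s) i - ?W))\<^sup>2 = (norm (anchor p C (\<lambda>n. ?X n - ?W) i))\<^sup>2"
    using assms(1) by (simp add: u_fed_def anchor_diff_const)
  also have "\<dots> \<le> anchor p C (\<lambda>n. (norm (?X n - ?W))\<^sup>2) i"
    using assms by (rule norm_anchor_power2_le)
  also have "\<dots> \<le> anchor p C (\<lambda>n. (gamma s)\<^sup>2 * E * ?Q n) i"
    using assms local_dev by (intro anchor_mono) auto
  finally show ?thesis
    by (simp only: anchor_mult_left)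
qed

theorem lemma6:
  fixes M :: "'w measure"
    and C E :: nat and p :: "nat \<Rightarrow> nat \<Rightarrow> real" and beta L sig G :: real
    and gamma :: "nat \<Rightarrow> real"
    and F :: "nat \<Rightarrow> 'a::euclidean_space \<Rightarrow> real" and gradF :: "nat \<Rightarrow> 'a \<Rightarrow> 'a"
    and g :: "nat \<Rightarrow> nat \<Rightarrow> nat \<Rightarrow> 'a \<Rightarrow> 'w \<Rightarrow> 'a"
    and w0 :: 'a
  assumes M: "prob_space M"
    and p_nonneg: "\<And>i n. i < C \<Longrightarrow> n < C \<Longrightarrow> p i n \<ge> 0"
    and p_sym: "\<And>i n. i < C \<Longrightarrow> n < C \<Longrightarrow> p i n = p n i"
    and p_diag: "\<And>i. i < C \<Longrightarrow> p i i = 0"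
    and p_sum: "(\<Sum>i<C. \<Sum>n<C. p i n) = 1"
    and p_pos: "\<And>i. i < C \<Longrightarrow> pbar p C i > 0"
    and beta: "0 < beta" "beta < 1"
    and E: "E \<ge> 1"
    and grad: "\<And>i x. i < C \<Longrightarrow> (F i has_derivative (\<lambda>h. gradF i x \<bullet> h)) (at x)"
    and smooth: "\<And>i. i < C \<Longrightarrow> L-lipschitz_on UNIV (gradF i)"
    and meas: "\<And>i t k. i < C \<Longrightarrow> k < E \<Longrightarrow>
        (\<lambda>\<omega>. g i t k (wt_fed p C beta E gamma (\<lambda>i t k x. g i t k x \<omega>) w0 t k i) \<omega>)
          \<in> borel_measurable M"
    and var: "\<And>i t k. i < C \<Longrightarrow> k < E \<Longrightarrow>
        integrable M (\<lambda>\<omega>. (norm (g i t k (wt_fed p C beta E gamma (\<lambda>i t k x. g i t k x \<omega>) w0 t k i) \<omega>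
             - gradF i (wt_fed p C beta E gamma (\<lambda>i t k x. g i t k x \<omega>) w0 t k i)))\<^sup>2)
        \<and> (\<integral>\<omega>. (norm (g i t k (wt_fed p C beta E gamma (\<lambda>i t k x. g i t k x \<omega>) w0 t k i) \<omega>
             - gradF i (wt_fed p C beta E gamma (\<lambda>i t k x. g i t k x \<omega>) w0 t k i)))\<^sup>2 \<partial>M) \<le> sig\<^sup>2"
    and second: "\<And>i t k. i < C \<Longrightarrow> k < E \<Longrightarrow>
        integrable M (\<lambda>\<omega>. (norm (g i t k (wt_fed p C beta E gamma (\<lambda>i t k x. g i t k x \<omega>) w0 t k i) \<omega>))\<^sup>2)
        \<and> (\<integral>\<omega>. (norm (g i t k (wt_fed p C beta E gamma (\<lambda>i t k x. g i t k x \<omega>) w0 t k i) \<omega>))\<^sup>2 \<partial>M) \<le> G\<^sup>2"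
  shows "\<forall>t i j. i < C \<longrightarrow> j < C \<longrightarrow>
    (\<integral>\<omega>. (norm (u_fed p C beta E gamma (\<lambda>i t k x. g i t k x \<omega>) w0 t i
                 - u_fed p C beta E gamma (\<lambda>i t k x. g i t k x \<omega>) w0 t j))\<^sup>2 \<partial>M)
      \<le> (if t \<ge> 1 then 4 * (gamma (t - 1))\<^sup>2 * (real E)\<^sup>2 * G\<^sup>2 else 0)"
proof (intro allI impI)
  fix t i j assume i: "i < C" and j: "j < C"
  let ?u = "\<lambda>\<omega> l. u_fed p C beta E gamma (\<lambda>i t k x. g i t k x \<omega>) w0 t l"
  let ?W = "\<lambda>\<omega> s. wbar_fed p C beta E gamma (\<lambda>i t k x. g i t k x \<omega>) w0 s"
  show "(\<integral>\<omega>. (norm (?u \<omega> i - ?u \<omega> j))\<^sup>2 \<partial>M)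
          \<le> (if t \<ge> 1 then 4 * (gamma (t - 1))\<^sup>2 * (real E)\<^sup>2 * G\<^sup>2 else 0)"
  proof (cases t)
    case 0
    then show ?thesis by (simp add: u_fed_def)
  next
    case (Suc s)
    interpret prob_space M by (rule M)
    define Q where "Q n \<omega> = local_grads_sq_norm_sum p C beta E gamma (\<lambda>i t k x. g i t k x \<omega>) w0 s n"
      for n \<omega>
    define A where "A l \<omega> = (gamma s)\<^sup>2 * E * anchor p C (\<lambda>n. Q n \<omega>) l" for l \<omega>
    have Q_int: "integrable M (Q n)" "integral\<^sup>L M (Q n) \<le> E * G\<^sup>2" if "n < C" for n
      using second[OF that] integral_sum_le[of "{..<E}" M _ "G\<^sup>2"]
      unfolding Q_def local_grads_sq_norm_sum_def by auto
    have A_int: "integrable M (A l)" for l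
      unfolding A_def using Q_int by (intro integrable_mult_right integrable_anchor)
    have A_le: "integral\<^sup>L M (A l) \<le> (gamma s)\<^sup>2 * E * (E * G\<^sup>2)" if "l < C" for l
      unfolding A_def using p_pos p_nonneg Q_int that
      by (simp add: mult_left_mono integral_anchor_le)
    have u_dev: "(norm (?u \<omega> l - ?W \<omega> s))\<^sup>2 \<le> A l \<omega>" if "l < C" for l \<omega>
      using norm_u_fed_minus_wbar_fed_power2_le[OF p_pos[OF that] p_nonneg[OF that]]
      unfolding Suc A_def Q_def by simp
    have "(norm (?u \<omega> i - ?u \<omega> j))\<^sup>2 \<le> 2 * A i \<omega> + 2 * A j \<omega>" for \<omega>
      using norm_diff_power2_le[of "?u \<omega> i" "?u \<omega> j" "?W \<omega> s"]
        u_dev[OF i, of \<omega>] u_dev[OF j, of \<omega>]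
      by linarith
    \<comment> \<open>The left-hand side need not be integrable; \<open>integral_mono'\<close> only needs a
      nonnegative integrable majorant.\<close>
    then have "(\<integral>\<omega>. (norm (?u \<omega> i - ?u \<omega> j))\<^sup>2 \<partial>M) \<le> (\<integral>\<omega>. 2 * A i \<omega> + 2 * A j \<omega> \<partial>M)"
      by (intro integral_mono' order_trans[OF zero_le_power2]) (use A_int in auto)
    also have "\<dots> \<le> 4 * (gamma s)\<^sup>2 * E\<^sup>2 * G\<^sup>2"
      using A_int A_le[OF i] A_le[OF j] by (simp add: power2_eq_square)
    finally show ?thesis
      using Suc by simp
  qed
qed

end
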